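(* Let $A$ be a real $k\times n$ matrix and let $W$ be a nonnegative diagonal $n\times n$ matrix with trace $1$. Then there exists a $k$-element set $J\subseteq[n]$ such that \[ |\det A_J|^{1/k}\ge\sqrt{k/e}\cdot|\det AWA^T|^{1/(2k)} . \]
   Context: $[n]=\{1,\dots,n\}$; $A_J$ denotes the $k\times k$ submatrix of $A$ consisting of the columns indexed by $J$. *)

theory Defs
  imports Complex_Main "Jordan_Normal_Form.Determinant" "Jordan_Normal_Form.DL_Submatrix"
begin

end

theory Submission
  imports Defs
begin

(* By the Cauchy-Binet formula, det (A W A^T) = \<Sum>_J (\<Prod>_{j \<in> J} w_j) det (A_J)^2 is a
   combination of the squared maximal minors of A whose weights sum to at most 1/k!:
   multiplied by k! they are the contribution of the injective index maps to the expansion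
   of (\<Sum>_j w_j)^k = 1.  Hence the largest minor satisfies
   det (A_J)^2 \<ge> k! det (A W A^T) \<ge> (k/e)^k det (A W A^T), and taking 2k-th roots gives
   the claim. *)

(* pick J i is the i-th smallest element of J, counting from 0. *)

lemma pick_atLeastLessThan_0: "j < k \<Longrightarrow> pick {0..<k} j = j"
proof (induction j)
  case 0 then show ?case by (simp add: Least_eq_0)
next
  case (Suc j)
  then show ?case by (auto intro!: Least_equality)
qed

lemma bij_betw_pick:
  assumes "finite J"
  shows "bij_betw (pick J) {0..<card J} J"
proof (rule bij_betw_imageI)
  show "inj_on (pick J) {0..<card J}"
    by (rule linorder_inj_onI') (use pick_mono_le in fastforce)
  show "pick J ` {0..<card J} = J"
  proof
    show "pick J ` {0..<card J} \<subseteq> J" by (auto intro: pick_in_set_le)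
    show "J \<subseteq> pick J ` {0..<card J}"
    proof
      fix x assume x: "x \<in> J"
      have "card {a\<in>J. a < x} < card J"
        by (rule psubset_card_mono[OF assms]) (use x in blast)
      then show "x \<in> pick J ` {0..<card J}"
        by (intro rev_image_eqI[of "card {a\<in>J. a < x}"]) (simp_all add: pick_card_in_set[OF x])
    qed
  qed
qed

definition pick_perm :: "nat \<Rightarrow> nat set \<Rightarrow> (nat \<Rightarrow> nat) \<Rightarrow> nat \<Rightarrow> nat" where
  "pick_perm k J \<pi> = restrict (pick J \<circ> \<pi>) {0..<k}"

lemma bij_betw_pick_perm:
  assumes "finite J" "card J = k" "\<pi> permutes {0..<k}"
  shows "bij_betw (pick_perm k J \<pi>) {0..<k} J"
proof -
  have "bij_betw (pick J \<circ> \<pi>) {0..<k} J"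
    using bij_betw_trans[OF permutes_imp_bij[OF assms(3)]] bij_betw_pick[OF assms(1)] assms(2)
    by simp
  then show ?thesis
    by (rule bij_betw_cong[THEN iffD1, rotated]) (simp add: pick_perm_def)
qed

lemma sum_bij_betw_eq_sum_permutes:
  fixes G :: "(nat \<Rightarrow> nat) \<Rightarrow> 'a::comm_monoid_add"
  assumes "finite J" "card J = k"
  shows "(\<Sum>f | f \<in> extensional {0..<k} \<and> bij_betw f {0..<k} J. G f) =
    (\<Sum>\<pi> | \<pi> permutes {0..<k}. G (pick_perm k J \<pi>))"
proof -
  let ?B = "{f. f \<in> extensional {0..<k} \<and> bij_betw f {0..<k} J}"
  have pick: "bij_betw (pick J) {0..<k} J" using bij_betw_pick assms by blast
  define rank where "rank = inv_into {0..<k} (pick J)"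
  define perm_of where "perm_of f i = (if i < k then rank (f i) else i)" for f i
  have perm_of_pick_perm: "perm_of (pick_perm k J \<pi>) = \<pi>" if \<pi>: "\<pi> permutes {0..<k}" for \<pi>
  proof
    fix i
    show "perm_of (pick_perm k J \<pi>) i = \<pi> i"
      using bij_betw_inv_into_left[OF pick, of "\<pi> i"] permutes_in_image[OF \<pi>, of i]
        permutes_not_in[OF \<pi>, of i]
      by (simp add: perm_of_def pick_perm_def rank_def)
  qed
  have pick_perm_perm_of: "pick_perm k J (perm_of f) = f" if f: "f \<in> ?B" for f
  proof
    fix i
    show "pick_perm k J (perm_of f) i = f i"
      using f bij_betw_inv_into_right[OF pick, of "f i"] bij_betwE[of f "{0..<k}" J]
      by (simp add: perm_of_def pick_perm_def rank_def extensional_def)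
  qed
  have "pick_perm k J \<pi> \<in> ?B" if "\<pi> permutes {0..<k}" for \<pi>
    using bij_betw_pick_perm[OF assms that] by (simp add: pick_perm_def)
  moreover have "perm_of f permutes {0..<k}" if f: "f \<in> ?B" for f
  proof (rule bij_imp_permutes)
    have "bij_betw (rank \<circ> f) {0..<k} {0..<k}"
      using f bij_betw_trans bij_betw_inv_into[OF pick] unfolding rank_def by blast
    then show "bij_betw (perm_of f) {0..<k} {0..<k}"
      by (rule bij_betw_cong[THEN iffD1, rotated]) (simp add: perm_of_def)
  qed (simp add: perm_of_def)
  ultimately show ?thesis
    by (intro sum.reindex_bij_witness[where i = "pick_perm k J" and j = perm_of])
      (auto simp: perm_of_pick_perm pick_perm_perm_of)
qed

lemma sum_inj_on_PiE_eq_sum_subsets_permutes: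
  fixes G :: "(nat \<Rightarrow> nat) \<Rightarrow> 'a::comm_monoid_add"
  shows "(\<Sum>f | f \<in> Pi\<^sub>E {0..<k} (\<lambda>_. {0..<n}) \<and> inj_on f {0..<k}. G f) =
    (\<Sum>J | J \<subseteq> {0..<n} \<and> card J = k. \<Sum>\<pi> | \<pi> permutes {0..<k}. G (pick_perm k J \<pi>))"
proof -
  let ?F = "{f \<in> Pi\<^sub>E {0..<k} (\<lambda>_. {0..<n}). inj_on f {0..<k}}"
  let ?S = "{J. J \<subseteq> {0..<n} \<and> card J = k}"
  have "(\<Sum>f\<in>?F. G f) = (\<Sum>J\<in>?S. \<Sum>f | f \<in> ?F \<and> f ` {0..<k} = J. G f)"
  proof (rule sum.group[symmetric])
    show "finite ?F" by (simp add: finite_PiE)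
    show "finite ?S" by (rule finite_subset[of _ "Pow {0..<n}"]) auto
    show "(\<lambda>f. f ` {0..<k}) ` ?F \<subseteq> ?S" by (auto simp: card_image)
  qed
  also have "\<dots> = (\<Sum>J\<in>?S. \<Sum>f | f \<in> extensional {0..<k} \<and> bij_betw f {0..<k} J. G f)"
  proof (rule sum.cong[OF refl])
    fix J assume "J \<in> ?S"
    then have "{f. f \<in> ?F \<and> f ` {0..<k} = J} =
        {f. f \<in> extensional {0..<k} \<and> bij_betw f {0..<k} J}"
      by (auto simp: bij_betw_def PiE_def)
    then show "(\<Sum>f | f \<in> ?F \<and> f ` {0..<k} = J. G f) =
        (\<Sum>f | f \<in> extensional {0..<k} \<and> bij_betw f {0..<k} J. G f)"
      by simp
  qed
  also have "\<dots> = (\<Sum>J\<in>?S. \<Sum>\<pi> | \<pi> permutes {0..<k}. G (pick_perm k J \<pi>))"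
    by (intro sum.cong refl sum_bij_betw_eq_sum_permutes) (auto intro: finite_subset)
  finally show ?thesis .
qed

lemma submatrix_eq_mat_pick:
  assumes "A \<in> carrier_mat m n" "I \<subseteq> {0..<m}" "J \<subseteq> {0..<n}"
  shows "submatrix A I J = mat (card I) (card J) (\<lambda>(i, j). A $$ (pick I i, pick J j))"
proof -
  have "{i. i < dim_row A \<and> i \<in> I} = I" "{j. j < dim_col A \<and> j \<in> J} = J"
    using assms by auto
  then show ?thesis by (simp add: submatrix_def)
qed

definition rows_at :: "nat \<Rightarrow> (nat \<Rightarrow> nat) \<Rightarrow> 'a mat \<Rightarrow> 'a mat" where
  "rows_at k f B = mat k k (\<lambda>(i, j). B $$ (f i, j))"

lemma det_rows_at_not_inj:
  assumes "\<not> inj_on f {0..<k}"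
  shows "det (rows_at k f B) = 0"
proof -
  from assms obtain i j where "i < k" "j < k" "i \<noteq> j" "f i = f j"
    unfolding inj_on_def by auto
  then show ?thesis
    by (intro det_identical_rows[of _ k i j]) (auto simp: rows_at_def intro!: eq_vecI)
qed

lemma rows_at_pick_eq_submatrix:
  assumes B: "B \<in> carrier_mat n k" and J: "J \<subseteq> {0..<n}" "card J = k"
  shows "rows_at k (pick J) B = submatrix B J {0..<k}"
  unfolding submatrix_eq_mat_pick[OF B J(1) order_refl] rows_at_def
  by (rule eq_matI) (simp_all add: J(2) pick_atLeastLessThan_0)

lemma det_rows_at_pick_perm:
  assumes "\<pi> permutes {0..<k}"
  shows "det (rows_at k (pick_perm k J \<pi>) B) = signof \<pi> * det (rows_at k (pick J) B)"
proof -
  have "rows_at k (pick_perm k J \<pi>) B = mat k k (\<lambda>(i, j). rows_at k (pick J) B $$ (\<pi> i, j))"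
    by (rule eq_matI)
      (use permutes_in_image[OF assms] in \<open>auto simp: rows_at_def pick_perm_def\<close>)
  moreover have "rows_at k (pick J) B \<in> carrier_mat k k" by (simp add: rows_at_def)
  ultimately show ?thesis using det_permute_rows[OF _ assms] by simp
qed

lemma det_mult_eq_sum_PiE:
  fixes A B :: "'a::comm_ring_1 mat"
  assumes A: "A \<in> carrier_mat k n" and B: "B \<in> carrier_mat n k"
  shows "det (A * B) = (\<Sum>f\<in>Pi\<^sub>E {0..<k} (\<lambda>_. {0..<n}).
    (\<Prod>i\<in>{0..<k}. A $$ (i, f i)) * det (rows_at k f B))"
proof -
  let ?P = "{p. p permutes {0..<k}}"
  let ?F = "Pi\<^sub>E {0..<k} (\<lambda>_. {0..<n})"
  have det_rows_at:
    "det (rows_at k f B) = (\<Sum>p\<in>?P. signof p * (\<Prod>i\<in>{0..<k}. B $$ (f i, p i)))" for f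
    by (subst det_def'[of _ k]) (auto simp: rows_at_def permutes_in_image intro!: sum.cong prod.cong)
  have "det (A * B) =
      (\<Sum>p\<in>?P. signof p * (\<Prod>i\<in>{0..<k}. \<Sum>l\<in>{0..<n}. A $$ (i, l) * B $$ (l, p i)))"
    using A B by (subst det_def'[of _ k])
      (auto simp: permutes_in_image scalar_prod_def intro!: sum.cong prod.cong)
  also have "\<dots> =
      (\<Sum>p\<in>?P. signof p * (\<Sum>f\<in>?F. \<Prod>i\<in>{0..<k}. A $$ (i, f i) * B $$ (f i, p i)))"
    by (subst prod_sum_PiE) auto
  also have "\<dots> = (\<Sum>f\<in>?F. \<Sum>p\<in>?P.
      (\<Prod>i\<in>{0..<k}. A $$ (i, f i)) * (signof p * (\<Prod>i\<in>{0..<k}. B $$ (f i, p i))))"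
    by (subst sum.swap) (simp add: sum_distrib_left prod.distrib mult_ac)
  also have "\<dots> = (\<Sum>f\<in>?F. (\<Prod>i\<in>{0..<k}. A $$ (i, f i)) * det (rows_at k f B))"
    by (simp add: det_rows_at sum_distrib_left)
  finally show ?thesis .
qed

lemma det_submatrix_eq_sum_permutes:
  assumes A: "A \<in> carrier_mat k n" and J: "J \<subseteq> {0..<n}" "card J = k"
  shows "det (submatrix A {0..<k} J) =
    (\<Sum>\<pi> | \<pi> permutes {0..<k}. signof \<pi> * (\<Prod>i\<in>{0..<k}. A $$ (i, pick J (\<pi> i))))"
  unfolding submatrix_eq_mat_pick[OF A order_refl J(1)] J(2) card_atLeastLessThan diff_zero
  by (subst det_def'[of _ k])
    (auto simp: pick_atLeastLessThan_0 permutes_in_image intro!: sum.cong prod.cong)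

theorem Cauchy_Binet:
  fixes A B :: "'a::comm_ring_1 mat"
  assumes A: "A \<in> carrier_mat k n" and B: "B \<in> carrier_mat n k"
  shows "det (A * B) = (\<Sum>J | J \<subseteq> {0..<n} \<and> card J = k.
    det (submatrix A {0..<k} J) * det (submatrix B J {0..<k}))"
proof -
  let ?F = "Pi\<^sub>E {0..<k} (\<lambda>_. {0..<n})"
  let ?S = "{J. J \<subseteq> {0..<n} \<and> card J = k}"
  let ?P = "{\<pi>. \<pi> permutes {0..<k}}"
  define g where "g f = (\<Prod>i\<in>{0..<k}. A $$ (i, f i)) * det (rows_at k f B)" for f
  have "det (A * B) = (\<Sum>f\<in>?F. g f)"
    unfolding g_def by (rule det_mult_eq_sum_PiE[OF A B])
  also have "\<dots> = (\<Sum>f | f \<in> ?F \<and> inj_on f {0..<k}. g f)"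
    by (rule sum.mono_neutral_right) (auto simp: finite_PiE g_def det_rows_at_not_inj)
  also have "\<dots> = (\<Sum>J\<in>?S. \<Sum>\<pi>\<in>?P. g (pick_perm k J \<pi>))"
    by (rule sum_inj_on_PiE_eq_sum_subsets_permutes)
  also have "\<dots> = (\<Sum>J\<in>?S. det (submatrix A {0..<k} J) * det (submatrix B J {0..<k}))"
  proof (rule sum.cong[OF refl])
    fix J assume J: "J \<in> ?S"
    have "g (pick_perm k J \<pi>) =
        signof \<pi> * (\<Prod>i\<in>{0..<k}. A $$ (i, pick J (\<pi> i))) * det (submatrix B J {0..<k})"
      if "\<pi> \<in> ?P" for \<pi>
    proof -
      have "(\<Prod>i\<in>{0..<k}. A $$ (i, pick_perm k J \<pi> i)) = (\<Prod>i\<in>{0..<k}. A $$ (i, pick J (\<pi> i)))"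
        by (simp add: pick_perm_def)
      then show ?thesis
        using that J by (simp add: g_def det_rows_at_pick_perm rows_at_pick_eq_submatrix[OF B])
    qed
    then show "(\<Sum>\<pi>\<in>?P. g (pick_perm k J \<pi>)) =
        det (submatrix A {0..<k} J) * det (submatrix B J {0..<k})"
      using J by (simp add: det_submatrix_eq_sum_permutes[OF A] sum_distrib_right)
  qed
  finally show ?thesis .
qed

lemma det_scale_rows:
  fixes M :: "'a::comm_ring_1 mat"
  assumes "M \<in> carrier_mat k k"
  shows "det (mat k k (\<lambda>(i, j). c i * M $$ (i, j))) = (\<Prod>i\<in>{0..<k}. c i) * det M"
proof -
  have "det (mat k k (\<lambda>(i, j). c i * M $$ (i, j))) =
      (\<Sum>p | p permutes {0..<k}. signof p * (\<Prod>i\<in>{0..<k}. c i * M $$ (i, p i)))"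
    by (subst det_def'[of _ k]) (auto simp: permutes_in_image intro!: sum.cong prod.cong)
  also have "\<dots> = (\<Prod>i\<in>{0..<k}. c i) *
      (\<Sum>p | p permutes {0..<k}. signof p * (\<Prod>i\<in>{0..<k}. M $$ (i, p i)))"
    by (simp add: prod.distrib sum_distrib_left mult_ac)
  finally show ?thesis using det_def'[OF assms] by simp
qed

lemma index_diagonal_mat_mult:
  assumes W: "W \<in> carrier_mat n n" "diagonal_mat W" and M: "M \<in> carrier_mat n m"
    and ij: "i < n" "j < m"
  shows "(W * M) $$ (i, j) = W $$ (i, i) * M $$ (i, j)"
proof -
  have "(W * M) $$ (i, j) = (\<Sum>l\<in>{0..<n}. W $$ (i, l) * M $$ (l, j))"
    using W M ij by (simp add: scalar_prod_def)
  also have "\<dots> = (\<Sum>l\<in>{0..<n}. if l = i then W $$ (i, i) * M $$ (i, j) else 0)"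
    using W ij by (intro sum.cong) (auto simp: diagonal_mat_def)
  finally show ?thesis using ij by simp
qed

lemma det_submatrix_diagonal_mult_transpose:
  fixes A W :: "'a::comm_ring_1 mat"
  assumes A: "A \<in> carrier_mat k n" and W: "W \<in> carrier_mat n n" "diagonal_mat W"
    and J: "J \<subseteq> {0..<n}" "card J = k"
  shows "det (submatrix (W * transpose_mat A) J {0..<k}) =
    (\<Prod>j\<in>J. W $$ (j, j)) * det (submatrix A {0..<k} J)"
proof -
  let ?AJ = "submatrix A {0..<k} J"
  have At: "transpose_mat A \<in> carrier_mat n k" using A by simp
  then have WAt: "W * transpose_mat A \<in> carrier_mat n k" using W by simp
  have AJ: "?AJ = mat k k (\<lambda>(i, j). A $$ (i, pick J j))"
    unfolding submatrix_eq_mat_pick[OF A order_refl J(1)] J(2)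
    by (rule eq_matI) (auto simp: pick_atLeastLessThan_0)
  have pick_in: "i < k \<Longrightarrow> pick J i < n" for i using J pick_in_set_le[of i J] by auto
  have "submatrix (W * transpose_mat A) J {0..<k} =
      mat k k (\<lambda>(i, j). W $$ (pick J i, pick J i) * transpose_mat ?AJ $$ (i, j))"
    unfolding submatrix_eq_mat_pick[OF WAt J(1) order_refl] J(2) AJ
    by (rule eq_matI)
      (use A in \<open>auto simp: index_diagonal_mat_mult[OF W At] pick_in pick_atLeastLessThan_0\<close>)
  then have "det (submatrix (W * transpose_mat A) J {0..<k}) =
      (\<Prod>i\<in>{0..<k}. W $$ (pick J i, pick J i)) * det ?AJ"
    using det_scale_rows[of "transpose_mat ?AJ" k] det_transpose[of ?AJ k] AJ by simp
  also have "(\<Prod>i\<in>{0..<k}. W $$ (pick J i, pick J i)) = (\<Prod>j\<in>J. W $$ (j, j))"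
    using prod.reindex_bij_betw[OF bij_betw_pick, of J "\<lambda>j. W $$ (j, j)"] J finite_subset
    by fastforce
  finally show ?thesis .
qed

lemma det_mult_diagonal_mult_transpose:
  fixes A W :: "'a::comm_ring_1 mat"
  assumes A: "A \<in> carrier_mat k n" and W: "W \<in> carrier_mat n n" "diagonal_mat W"
  shows "det (A * W * transpose_mat A) = (\<Sum>J | J \<subseteq> {0..<n} \<and> card J = k.
    (\<Prod>j\<in>J. W $$ (j, j)) * det (submatrix A {0..<k} J) ^ 2)"
proof -
  have WAt: "W * transpose_mat A \<in> carrier_mat n k" using A W by simp
  have "A * W * transpose_mat A = A * (W * transpose_mat A)"
    using A W by (simp add: assoc_mult_mat[of _ k n _ n _ k])
  then show ?thesis
    by (simp add: Cauchy_Binet[OF A WAt] det_submatrix_diagonal_mult_transpose[OF A W]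
        power2_eq_square mult_ac)
qed

lemma det_mult_diagonal_mult_transpose_nonneg:
  fixes A W :: "real mat"
  assumes A: "A \<in> carrier_mat k n" and W: "W \<in> carrier_mat n n" "diagonal_mat W"
    and W_nonneg: "\<And>l. l < n \<Longrightarrow> 0 \<le> W $$ (l, l)"
  shows "0 \<le> det (A * W * transpose_mat A)"
  unfolding det_mult_diagonal_mult_transpose[OF A W]
  using W_nonneg by (intro sum_nonneg mult_nonneg_nonneg prod_nonneg) auto

lemma fact_mult_sum_prod_subsets_le:
  fixes w :: "nat \<Rightarrow> 'a::linordered_semidom"
  assumes w: "\<And>l. l < n \<Longrightarrow> 0 \<le> w l"
  shows "fact k * (\<Sum>J | J \<subseteq> {0..<n} \<and> card J = k. \<Prod>j\<in>J. w j) \<le> (\<Sum>l<n. w l) ^ k"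
proof -
  let ?S = "{J. J \<subseteq> {0..<n} \<and> card J = k}"
  let ?P = "{\<pi>. \<pi> permutes {0..<k}}"
  let ?F = "Pi\<^sub>E {0..<k} (\<lambda>_. {0..<n})"
  have prod_pick_perm: "(\<Prod>i\<in>{0..<k}. w (pick_perm k J \<pi> i)) = (\<Prod>j\<in>J. w j)"
    if "J \<in> ?S" "\<pi> \<in> ?P" for J \<pi>
  proof -
    have "finite J" using that finite_subset[of J "{0..<n}"] by auto
    then show ?thesis using that by (simp add: prod.reindex_bij_betw bij_betw_pick_perm)
  qed
  have "fact k * (\<Sum>J\<in>?S. \<Prod>j\<in>J. w j) = (\<Sum>J\<in>?S. \<Sum>\<pi>\<in>?P. \<Prod>j\<in>J. w j)"
    by (simp add: card_permutations sum_distrib_left)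
  also have "\<dots> = (\<Sum>J\<in>?S. \<Sum>\<pi>\<in>?P. \<Prod>i\<in>{0..<k}. w (pick_perm k J \<pi> i))"
    by (intro sum.cong refl) (simp add: prod_pick_perm)
  also have "\<dots> = (\<Sum>f | f \<in> ?F \<and> inj_on f {0..<k}. \<Prod>i\<in>{0..<k}. w (f i))"
    by (rule sum_inj_on_PiE_eq_sum_subsets_permutes[symmetric])
  also have "\<dots> \<le> (\<Sum>f\<in>?F. \<Prod>i\<in>{0..<k}. w (f i))"
  proof (rule sum_mono2)
    show "0 \<le> (\<Prod>i\<in>{0..<k}. w (f i))" if "f \<in> ?F - {f \<in> ?F. inj_on f {0..<k}}" for f
      using that w by (intro prod_nonneg) (auto simp: PiE_def Pi_def)
  qed (auto simp: finite_PiE)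
  also have "\<dots> = (\<Prod>i\<in>{0..<k}. \<Sum>l\<in>{0..<n}. w l)"
    by (rule prod_sum_PiE[symmetric]) auto
  also have "\<dots> = (\<Sum>l<n. w l) ^ k"
    by (simp add: atLeast0LessThan)
  finally show ?thesis .
qed

lemma pow_div_exp_le_fact: "(real k / exp 1) ^ k \<le> fact k"
proof -
  have "(\<Sum>m\<in>{k}. real k ^ m /\<^sub>R fact m) \<le> (\<Sum>m. real k ^ m /\<^sub>R fact m)"
    by (rule sum_le_suminf[OF summable_exp_generic]) auto
  then have "real k ^ k / fact k \<le> exp (real k)"
    by (simp add: exp_def divide_inverse mult.commute)
  moreover have "exp (real k) = exp 1 ^ k"
    by (simp add: exp_of_nat_mult[symmetric])
  ultimately show ?thesis by (simp add: power_divide divide_le_eq mult.commute)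
qed

lemma abs_powr_eq_power2_powr:
  "\<bar>d :: real\<bar> powr (1 / real k) = (d ^ 2) powr (1 / (2 * real k))"
proof (cases "d = 0")
  case False
  then have "d ^ 2 = \<bar>d\<bar> powr 2" by (simp add: powr_realpow[symmetric])
  moreover have "2 * (1 / (2 * real k)) = 1 / real k" by simp
  ultimately show ?thesis by (simp only: powr_powr)
qed simp

lemma sqrt_mult_powr_le_abs_powr:
  fixes q b d :: real
  assumes q: "0 < q" and b: "0 \<le> b" and k: "0 < k" and le: "q ^ k * b \<le> d ^ 2"
  shows "sqrt q * b powr (1 / (2 * real k)) \<le> \<bar>d\<bar> powr (1 / real k)"
proof -
  have "(q ^ k) powr (1 / (2 * real k)) = (q powr real k) powr (1 / (2 * real k))"
    using q by (simp add: powr_realpow)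
  also have "\<dots> = sqrt q"
    using q k by (simp add: powr_powr powr_half_sqrt)
  finally have "sqrt q * b powr (1 / (2 * real k)) = (q ^ k * b) powr (1 / (2 * real k))"
    using q b by (simp add: powr_mult)
  also have "\<dots> \<le> (d ^ 2) powr (1 / (2 * real k))"
    using le q b by (intro powr_mono2) auto
  finally show ?thesis by (simp only: abs_powr_eq_power2_powr)
qed

lemma exists_det_submatrix_power2_ge:
  fixes A W :: "real mat"
  assumes "k \<le> n" and A: "A \<in> carrier_mat k n" and W: "W \<in> carrier_mat n n" "diagonal_mat W"
    and W_nonneg: "\<And>l. l < n \<Longrightarrow> 0 \<le> W $$ (l, l)" and trace: "(\<Sum>l<n. W $$ (l, l)) = 1"
  shows "\<exists>J. J \<subseteq> {0..<n} \<and> card J = k \<and>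
    fact k * det (A * W * transpose_mat A) \<le> det (submatrix A {0..<k} J) ^ 2"
proof -
  let ?S = "{J. J \<subseteq> {0..<n} \<and> card J = k}"
  define d where "d J = det (submatrix A {0..<k} J) ^ 2" for J
  define p where "p J = (\<Prod>j\<in>J. W $$ (j, j))" for J
  have fin: "finite ?S" by (rule finite_subset[of _ "Pow {0..<n}"]) auto
  have "{0..<k} \<in> ?S" using \<open>k \<le> n\<close> by auto
  then have "Max (d ` ?S) \<in> d ` ?S" using fin by (intro Max_in) blast+
  then obtain J0 where J0: "J0 \<in> ?S" "d J0 = Max (d ` ?S)" by auto
  have max: "d J \<le> d J0" if "J \<in> ?S" for J
    unfolding J0(2) using fin that by (intro Max_ge) auto
  have p_nonneg: "0 \<le> p J" if "J \<in> ?S" for J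
    using that W_nonneg unfolding p_def by (intro prod_nonneg) auto
  have "det (A * W * transpose_mat A) = (\<Sum>J\<in>?S. p J * d J)"
    unfolding det_mult_diagonal_mult_transpose[OF A W] p_def d_def ..
  also have "\<dots> \<le> (\<Sum>J\<in>?S. p J * d J0)"
    using p_nonneg max by (intro sum_mono mult_left_mono) auto
  also have "\<dots> = d J0 * (\<Sum>J\<in>?S. p J)"
    by (simp add: sum_distrib_left mult.commute)
  finally have "fact k * det (A * W * transpose_mat A) \<le> d J0 * (fact k * (\<Sum>J\<in>?S. p J))"
    by (simp add: mult.left_commute)
  also have "\<dots> \<le> d J0"
    using fact_mult_sum_prod_subsets_le[of n "\<lambda>j. W $$ (j, j)" k] W_nonneg trace
    by (intro mult_left_le) (auto simp: p_def d_def)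
  finally show ?thesis using J0 unfolding d_def by blast
qed

theorem lemma3p2:
  fixes A W :: "real mat" and k n :: nat
  assumes "1 \<le> k" and "k \<le> n"
    and "A \<in> carrier_mat k n"
    and "W \<in> carrier_mat n n"
    and "diagonal_mat W"
    and "\<forall>i<n. W $$ (i, i) \<ge> 0"
    and "(\<Sum>i<n. W $$ (i, i)) = 1"
  shows "\<exists>J. J \<subseteq> {0..<n} \<and> card J = k \<and>
           \<bar>det (submatrix A {0..<k} J)\<bar> powr (1 / real k)
             \<ge> sqrt (real k / exp 1) *
               \<bar>det (A * W * transpose_mat A)\<bar> powr (1 / (2 * real k))"
proof -
  let ?G = "det (A * W * transpose_mat A)"
  obtain J where J: "J \<subseteq> {0..<n}" "card J = k"
    and le: "fact k * ?G \<le> det (submatrix A {0..<k} J) ^ 2"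
    using exists_det_submatrix_power2_ge assms(2-7) by blast
  have G: "0 \<le> ?G"
    using det_mult_diagonal_mult_transpose_nonneg assms(3-6) by blast
  then have "(real k / exp 1) ^ k * ?G \<le> det (submatrix A {0..<k} J) ^ 2"
    using pow_div_exp_le_fact[of k] le by (meson mult_right_mono order_trans)
  then have "sqrt (real k / exp 1) * ?G powr (1 / (2 * real k))
      \<le> \<bar>det (submatrix A {0..<k} J)\<bar> powr (1 / real k)"
    using assms(1) G by (intro sqrt_mult_powr_le_abs_powr) auto
  then show ?thesis using J G by auto
qed

end
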